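(* Let $S=\{x_1,\ldots,x_n\}$ be a factor-closed set of $n$ distinct positive integers, let $k\in\mathbb{N}$, and let $F(r;n_1,\ldots,n_k)$ ($r,n_1,\ldots,n_k\in\mathbb{N}$) be even $\pmod r$ with respect to $n_1,\ldots,n_k$. Let $I=\{2,3,\ldots,k+1\}$ if $k$ is even and $I=\{1,2,\ldots,k+1\}$ if $k$ is odd. Then \[ \det_I\bigl(F(x_{i_1};x_{i_2},\ldots,x_{i_{k+1}})\bigr)_{1\le i_1,\ldots,i_{k+1}\le n}=(x_1\cdots x_n)^k\prod_{v=1}^n\alpha_{x_v}(x_v,\ldots,x_v). \]
   Context: A set $S$ of positive integers is factor-closed if every positive divisor of every element of $S$ lies in $S$. $F$ is even $\pmod r$ if $F(r;n_1,\ldots,n_k)=F(r;\gcd(n_1,r),\ldots,\gcd(n_k,r))$ for all $r,n_1,\ldots,n_k$. $c(k,n):=\sum_{d\mid\gcd(k,n)}\mu(k/d)\,d$ is the Ramanujan sum. The finite Fourier coefficients are, for $d_1,\ldots,d_k\mid r$, \[ \alpha_r(d_1,\ldots,d_k):=\frac{1}{r^k}\sum_{\delta_1,\ldots,\delta_k\mid r}F(r;\delta_1,\ldots,\delta_k)\,c\Bigl(\frac{r}{\delta_1},\frac{r}{d_1}\Bigr)\cdots c\Bigl(\frac{r}{\delta_k},\frac{r}{d_k}\Bigr). \] For a $K$-dimensional matrix $A$ of order $n$ and $J\subseteq\{1,\ldots,K\}$, with $\eta_j=1$ if $j\in J$ and $0$ otherwise, the hyperdeterminant is $\det_JA:=\frac{1}{n!}\sum_{\sigma_1,\ldots,\sigma_K\in\mathfrak{S}_n}\prod_{j=1}^K\mathrm{sgn}(\sigma_j)^{\eta_j}\prod_{v=1}^nA(\sigma_1(v),\ldots,\sigma_K(v))$,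 $\mathfrak{S}_n$ the symmetric group on $\{1,\ldots,n\}$. *)

theory Defs
  imports "HOL-Combinatorics.Permutations" "HOL-Computational_Algebra.Squarefree" Complex_Main
begin

definition moebius_mu :: "nat \<Rightarrow> int" where
  "moebius_mu m = (if squarefree m then (-1) ^ card (prime_factors m) else 0)"

definition ramanujan_c :: "nat \<Rightarrow> nat \<Rightarrow> int" where
  "ramanujan_c k n = (\<Sum>d\<in>{d. d dvd gcd k n}. moebius_mu (k div d) * int d)"

definition factor_closed :: "nat set \<Rightarrow> bool" where
  "factor_closed S \<longleftrightarrow> (\<forall>m\<in>S. \<forall>d. 0 < d \<and> d dvd m \<longrightarrow> d \<in> S)"

text \<open>F(r; n_1,...,n_k) is represented as F r [n_1,...,n_k].\<close>
definition even_mod :: "nat \<Rightarrow> (nat \<Rightarrow> nat list \<Rightarrow> complex) \<Rightarrow> bool" where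
  "even_mod k F \<longleftrightarrow> (\<forall>r ns. 0 < r \<and> length ns = k \<and> (\<forall>m\<in>set ns. 0 < m) \<longrightarrow>
      F r ns = F r (map (\<lambda>m. gcd m r) ns))"

definition fourier_alpha :: "nat \<Rightarrow> (nat \<Rightarrow> nat list \<Rightarrow> complex) \<Rightarrow> nat \<Rightarrow> nat list \<Rightarrow> complex" where
  "fourier_alpha k F r ds = (1 / of_nat r ^ k) *
     (\<Sum>\<delta>s\<in>{\<delta>s. length \<delta>s = k \<and> (\<forall>\<delta>\<in>set \<delta>s. \<delta> dvd r)}.
        F r \<delta>s * (\<Prod>i<k. of_int (ramanujan_c (r div (\<delta>s ! i)) (r div (ds ! i)))))"

text \<open>Hyperdeterminant det_J A of a K-dimensional matrix A of order n;
  A is indexed by lists [i_1,...,i_K] with entries in {1..n}; J \<subseteq> {1..K}.\<close>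
definition hyperdet :: "nat \<Rightarrow> nat \<Rightarrow> nat set \<Rightarrow> (nat list \<Rightarrow> complex) \<Rightarrow> complex" where
  "hyperdet K n J A = (1 / of_nat (fact n)) *
     (\<Sum>\<sigma>\<in>PiE {1..K} (\<lambda>_. {p. p permutes {1..n}}).
        (\<Prod>j\<in>{1..K}. if j \<in> J then of_int (sign (\<sigma> j)) else 1) *
        (\<Prod>v\<in>{1..n}. A (map (\<lambda>j. \<sigma> j v) [1..<K+1])))"

end

(*
  Write r = x_i. As F is even, F(r; n_2, ..., n_{k+1}) depends only on the gcd(n_j, r), and
  Moebius inversion in k variables writes it as a sum of coefficients g_r(e) over the tuples e
  of divisors e_j of gcd(n_j, r). Since S is factor-closed, every e_j is some x_m, so the
  hypermatrix factors as

    A(i_1, i_2, ..., i_{k+1}) = sum_m G(i_1, m) * prod_j E(i_j, m_j),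

  with the divisibility matrix E(i, m) = [x_m | x_i] and G(i, m) = 0 unless all x_{m_j}
  divide x_{i_1}. In the hyperdeterminant, the sums over the signed permutations in the
  directions 2, ..., k+1 become determinants of E whose columns are chosen by the j-th
  components of m. Such a determinant vanishes unless these columns form a permutation q, and
  then it is sign q, as E is unitriangular when the x_v are ordered by size. The support of G
  forces x_{q v} <= x_{p v} for the permutation p in the first direction, hence q = p. So every
  p contributes sign(p)^k, times sign p from the first direction exactly when k is odd, which
  is 1, times prod_v G(v; v, ..., v) = prod_v x_v^k alpha_{x_v}(x_v, ..., x_v).
*)
theory Submission
  imports Defs
begin

section \<open>Sums over finite function spaces\<close>

lemma prod_of_bool:
  "finite J \<Longrightarrow> (\<Prod>j\<in>J. of_bool (P j)) = (of_bool (\<forall>j\<in>J. P j) :: 'a::comm_semiring_1)"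
  by (induction J rule: finite_induct) auto

lemma sum_PiE_insert_mult_prod:
  fixes f :: "'b \<Rightarrow> 'c::comm_semiring_1"
  assumes J: "finite J" "a \<notin> J" and B: "\<And>j. j \<in> insert a J \<Longrightarrow> finite (B j)"
  shows "(\<Sum>\<sigma>\<in>PiE (insert a J) B. f (\<sigma> a) * (\<Prod>j\<in>J. g j (\<sigma> j)))
       = (\<Sum>p\<in>B a. f p) * (\<Prod>j\<in>J. \<Sum>p\<in>B j. g j p)"
proof -
  define h where "h = (\<lambda>j. if j \<in> J then g j else f)"
  have h: "(\<Prod>j\<in>insert a J. h j (\<sigma> j)) = f (\<sigma> a) * (\<Prod>j\<in>J. g j (\<sigma> j))" for \<sigma>
    using J by (simp add: h_def cong: prod.cong)
  have "(\<Sum>\<sigma>\<in>PiE (insert a J) B. f (\<sigma> a) * (\<Prod>j\<in>J. g j (\<sigma> j)))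
      = (\<Sum>\<sigma>\<in>PiE (insert a J) B. \<Prod>j\<in>insert a J. h j (\<sigma> j))"
    by (simp add: h)
  also have "\<dots> = (\<Prod>j\<in>insert a J. \<Sum>p\<in>B j. h j p)"
    using J B by (intro prod_sum_PiE[symmetric]) auto
  also have "\<dots> = (\<Sum>p\<in>B a. f p) * (\<Prod>j\<in>J. \<Sum>p\<in>B j. g j p)"
    using J by (simp add: h_def cong: prod.cong)
  finally show ?thesis .
qed

lemma sum_PiE_reindex_inj_on:
  fixes f :: "('j \<Rightarrow> 'c) \<Rightarrow> 'b::comm_semiring_1"
  assumes J: "finite J" and N: "finite N" and x: "inj_on x N" and B: "\<And>j. j \<in> J \<Longrightarrow> B j \<subseteq> x ` N"
  shows "(\<Sum>e\<in>PiE J B. f e) =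
    (\<Sum>m\<in>PiE J (\<lambda>_. N). f (\<lambda>j\<in>J. x (m j)) * of_bool (\<forall>j\<in>J. x (m j) \<in> B j))"
proof -
  have "(\<Sum>e\<in>PiE J B. f e) = (\<Sum>m\<in>PiE J (\<lambda>j. {v \<in> N. x v \<in> B j}). f (\<lambda>j\<in>J. x (m j)))"
  proof (rule sum.reindex_bij_witness[of _ "\<lambda>m. \<lambda>j\<in>J. x (m j)" "\<lambda>e. \<lambda>j\<in>J. inv_into N x (e j)"])
    fix e assume e: "e \<in> PiE J B"
    then have xN: "e j \<in> x ` N" if "j \<in> J" for j
      using B that by blast
    with e have "(\<lambda>j\<in>J. x ((\<lambda>j\<in>J. inv_into N x (e j)) j)) = e"
      by (auto simp: f_inv_into_f PiE_iff extensional_def)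
    then show "(\<lambda>j\<in>J. x ((\<lambda>j\<in>J. inv_into N x (e j)) j)) = e"
      and "f (\<lambda>j\<in>J. x ((\<lambda>j\<in>J. inv_into N x (e j)) j)) = f e"
      by simp_all
    show "(\<lambda>j\<in>J. inv_into N x (e j)) \<in> PiE J (\<lambda>j. {v \<in> N. x v \<in> B j})"
      using e xN by (auto simp: f_inv_into_f inv_into_into)
  next
    fix m assume "m \<in> PiE J (\<lambda>j. {v \<in> N. x v \<in> B j})"
    with x show "(\<lambda>j\<in>J. inv_into N x ((\<lambda>j\<in>J. x (m j)) j)) = m"
      and "(\<lambda>j\<in>J. x (m j)) \<in> PiE J B"
      by (auto simp: PiE_iff extensional_def)
  qed
  also have "PiE J (\<lambda>j. {v \<in> N. x v \<in> B j}) = PiE J (\<lambda>_. N) \<inter> {m. \<forall>j\<in>J. x (m j) \<in> B j}"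
    by (auto simp: PiE_iff)
  finally show ?thesis
    using J N by (simp add: finite_PiE restrict_def)
qed

lemma bij_betw_map_upt_PiE:
  "bij_betw (\<lambda>d. map d [a..<a+k]) (PiE {a..<a+k} (\<lambda>_. A)) {xs. length xs = k \<and> set xs \<subseteq> A}"
proof (rule bij_betw_byWitness[where f' = "\<lambda>xs. \<lambda>j\<in>{a..<a+k}. xs ! (j - a)"])
  show "\<forall>d\<in>PiE {a..<a+k} (\<lambda>_. A). (\<lambda>j\<in>{a..<a+k}. map d [a..<a+k] ! (j - a)) = d"
    by (auto simp: PiE_iff extensional_def fun_eq_iff)
  show "\<forall>xs\<in>{xs. length xs = k \<and> set xs \<subseteq> A}. map (\<lambda>j\<in>{a..<a+k}. xs ! (j - a)) [a..<a+k] = xs"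
    by (auto intro: nth_equalityI)
  show "(\<lambda>d. map d [a..<a+k]) ` PiE {a..<a+k} (\<lambda>_. A) \<subseteq> {xs. length xs = k \<and> set xs \<subseteq> A}"
    by auto
  show "(\<lambda>xs. \<lambda>j\<in>{a..<a+k}. xs ! (j - a)) ` {xs. length xs = k \<and> set xs \<subseteq> A} \<subseteq> PiE {a..<a+k} (\<lambda>_. A)"
    by (fastforce intro: subsetD[OF _ nth_mem])
qed

lemma bij_betw_eq_if_weight_le:
  fixes w :: "'a \<Rightarrow> 'b::ordered_cancel_comm_monoid_add"
  assumes N: "finite N" and w: "inj_on w N" and p: "bij_betw p N N" and q: "bij_betw q N N"
    and le: "\<And>v. v \<in> N \<Longrightarrow> w (q v) \<le> w (p v)" and v: "v \<in> N"
  shows "q v = p v"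
proof -
  have "(\<Sum>v\<in>N. w (q v)) = (\<Sum>v\<in>N. w (p v))"
    using sum.reindex_bij_betw[OF q, of w] sum.reindex_bij_betw[OF p, of w] by simp
  then have "w (q v) = w (p v)"
    by (rule sum_mono_inv[OF _ le v N])
  then show ?thesis
    using inj_onD[OF w] bij_betwE[OF p] bij_betwE[OF q] v by blast
qed

section \<open>Moebius inversion in several variables\<close>

lemma moebius_mu_mult_prime:
  assumes "prime p" "\<not> p dvd t" "t > 0"
  shows "moebius_mu (t * p) = - moebius_mu t"
proof -
  have "coprime t p"
    using assms by (simp add: prime_imp_coprime coprime_commute)
  then have "squarefree (t * p) \<longleftrightarrow> squarefree t"
    using squarefree_mult_coprime squarefree_prime[OF \<open>prime p\<close>] squarefree_multD(1) by blast
  moreover have "prime_factors (t * p) = insert p (prime_factors t)"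
    using assms by (simp add: prime_factors_product prime_prime_factors)
  moreover have "p \<notin> prime_factors t"
    using assms by auto
  ultimately show ?thesis
    by (simp add: moebius_mu_def)
qed

lemma moebius_mu_eq_0_if_prime_square_dvd:
  assumes "prime p" "p\<^sup>2 dvd t"
  shows "moebius_mu t = 0"
  using assms not_squarefreeI[of p t] prime_gt_1_nat[of p] by (auto simp: moebius_mu_def)

text \<open>Pairing each divisor t of m that is prime to p with t p; the remaining divisors
  are divisible by p^2.\<close>
lemma sum_moebius_mu_divisors:
  assumes "m > 0"
  shows "(\<Sum>t | t dvd m. moebius_mu t) = (if m = 1 then 1 else 0)"
proof (cases "m = 1")
  case False
  then obtain p where p: "prime p" "p dvd m"
    using prime_factor_nat by blast
  define A where "A = {t. t dvd m \<and> \<not> p dvd t}"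
  define B where "B = {t. t dvd m \<and> p dvd t}"
  have fin: "finite A" "finite B"
    using assms unfolding A_def B_def by auto
  have AB: "{t. t dvd m} = A \<union> B" "A \<inter> B = {}"
    unfolding A_def B_def by auto
  have image: "(\<lambda>t. t * p) ` A \<subseteq> B"
  proof clarify
    fix t assume "t \<in> A"
    then have "coprime t p" "t dvd m"
      using p by (auto simp: A_def prime_imp_coprime coprime_commute)
    then show "t * p \<in> B"
      using p by (simp add: B_def divides_mult)
  qed
  have vanish: "moebius_mu s = 0" if s: "s \<in> B - (\<lambda>t. t * p) ` A" for s
  proof -
    have "p dvd s"
      using s by (simp add: B_def)
    then obtain u where u: "s = u * p"
      by (metis dvdE mult.commute)
    have "u dvd m"
      using s u by (auto simp: B_def intro: dvd_mult_left)
    then have "p dvd u"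
      using s u by (auto simp: A_def)
    then have "p\<^sup>2 dvd s"
      using u by (auto simp: power2_eq_square)
    then show ?thesis
      using moebius_mu_eq_0_if_prime_square_dvd p(1) by blast
  qed
  have "(\<Sum>t | t dvd m. moebius_mu t) = sum moebius_mu A + sum moebius_mu ((\<lambda>t. t * p) ` A)"
    using fin AB image vanish by (simp add: sum.union_disjoint sum.mono_neutral_right)
  also have "sum moebius_mu ((\<lambda>t. t * p) ` A) = (\<Sum>t\<in>A. moebius_mu (t * p))"
    using prime_gt_0_nat[OF p(1)] by (subst sum.reindex) (auto simp: inj_on_def)
  also have "\<dots> = (\<Sum>t\<in>A. - moebius_mu t)"
    using assms p(1) by (intro sum.cong refl moebius_mu_mult_prime) (auto simp: A_def intro: Nat.gr0I)
  finally show ?thesis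
    using False by (simp add: sum_negf)
qed (simp add: moebius_mu_def)

lemma sum_moebius_mu_divisor_interval:
  assumes "d dvd c" "c > 0"
  shows "(\<Sum>e | d dvd e \<and> e dvd c. of_int (moebius_mu (e div d))) = (of_bool (d = c) :: 'a::ring_1)"
proof -
  obtain q where q: "c = d * q" and "d > 0" "q > 0"
    using assms by auto
  have "{e. d dvd e \<and> e dvd c} = (\<lambda>t. d * t) ` {t. t dvd q}"
    using \<open>d > 0\<close> q by auto
  then have "(\<Sum>e | d dvd e \<and> e dvd c. of_int (moebius_mu (e div d)))
      = (of_int (\<Sum>t | t dvd q. moebius_mu t) :: 'a)"
    using \<open>d > 0\<close> by (simp add: sum.reindex inj_on_def)
  also have "\<dots> = of_bool (d = c)"
    using sum_moebius_mu_divisors[OF \<open>q > 0\<close>] \<open>d > 0\<close> q by simp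
  finally show ?thesis .
qed

lemma sum_PiE_moebius_mu_interval:
  fixes c d :: "'j \<Rightarrow> nat"
  assumes J: "finite J" and c: "\<And>j. j \<in> J \<Longrightarrow> c j > 0" and d: "d \<in> PiE J (\<lambda>j. {t. t dvd c j})"
  shows "(\<Sum>e\<in>PiE J (\<lambda>j. {e. d j dvd e \<and> e dvd c j}). \<Prod>j\<in>J. of_int (moebius_mu (e j div d j)))
       = (of_bool (d = restrict c J) :: 'a::comm_ring_1)"
proof -
  have "(\<Sum>e\<in>PiE J (\<lambda>j. {e. d j dvd e \<and> e dvd c j}). \<Prod>j\<in>J. of_int (moebius_mu (e j div d j)))
      = (\<Prod>j\<in>J. \<Sum>e | d j dvd e \<and> e dvd c j. (of_int (moebius_mu (e div d j)) :: 'a))"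
    using J c by (intro prod_sum_PiE[symmetric]) auto
  also have "\<dots> = (\<Prod>j\<in>J. of_bool (d j = c j))"
    using c d by (intro prod.cong refl sum_moebius_mu_divisor_interval) auto
  also have "\<dots> = of_bool (d = restrict c J)"
    using J d by (auto simp: prod_of_bool PiE_iff extensional_def)
  finally show ?thesis .
qed

lemma moebius_inversion_PiE:
  fixes \<Phi> :: "('j \<Rightarrow> nat) \<Rightarrow> 'a::comm_ring_1"
  assumes J: "finite J" and c: "\<And>j. j \<in> J \<Longrightarrow> c j > 0"
  shows "(\<Sum>e\<in>PiE J (\<lambda>j. {d. d dvd c j}). \<Sum>d\<in>PiE J (\<lambda>j. {t. t dvd e j}).
            \<Phi> d * (\<Prod>j\<in>J. of_int (moebius_mu (e j div d j)))) = \<Phi> (restrict c J)"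
proof -
  define D where "D = PiE J (\<lambda>j. {d. d dvd c j})"
  define \<mu> where "\<mu> = (\<lambda>e d. \<Prod>j\<in>J. (of_int (moebius_mu (e j div d j)) :: 'a))"
  have fin: "finite D"
    using J c by (auto simp: D_def intro!: finite_PiE)
  have below: "PiE J (\<lambda>j. {t. t dvd e j}) = {d \<in> D. \<forall>j\<in>J. d j dvd e j}" if "e \<in> D" for e
    using that by (auto simp: D_def intro: dvd_trans)
  have above: "{e \<in> D. \<forall>j\<in>J. d j dvd e j} = PiE J (\<lambda>j. {e. d j dvd e \<and> e dvd c j})" if "d \<in> D" for d
    using that by (auto simp: D_def)
  have "(\<Sum>e\<in>D. \<Sum>d\<in>PiE J (\<lambda>j. {t. t dvd e j}). \<Phi> d * \<mu> e d)
      = (\<Sum>e\<in>D. \<Sum>d | d \<in> D \<and> (\<forall>j\<in>J. d j dvd e j). \<Phi> d * \<mu> e d)"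
    using below by (intro sum.cong) auto
  also have "\<dots> = (\<Sum>d\<in>D. \<Phi> d * (\<Sum>e | e \<in> D \<and> (\<forall>j\<in>J. d j dvd e j). \<mu> e d))"
    by (subst sum.swap_restrict[OF fin fin]) (simp only: sum_distrib_left)
  also have "\<dots> = (\<Sum>d\<in>D. \<Phi> d * of_bool (d = restrict c J))"
  proof (intro sum.cong refl)
    fix d assume d: "d \<in> D"
    have "(\<Sum>e | e \<in> D \<and> (\<forall>j\<in>J. d j dvd e j). \<mu> e d) = of_bool (d = restrict c J)"
      unfolding above[OF d] \<mu>_def using J c d by (intro sum_PiE_moebius_mu_interval) (auto simp: D_def)
    then show "\<Phi> d * (\<Sum>e | e \<in> D \<and> (\<forall>j\<in>J. d j dvd e j). \<mu> e d) = \<Phi> d * of_bool (d = restrict c J)"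
      by simp
  qed
  also have "\<dots> = \<Phi> (restrict c J)"
  proof -
    have "D \<inter> {d. d = restrict c J} = {restrict c J}"
      by (auto simp: D_def)
    then show ?thesis
      using fin by simp
  qed
  finally show ?thesis
    unfolding D_def \<mu>_def .
qed

lemma ramanujan_c_Suc_0_right: "ramanujan_c a (Suc 0) = moebius_mu a"
  by (simp add: ramanujan_c_def)

section \<open>Determinants indexed by a finite set\<close>

definition det_on :: "'a set \<Rightarrow> ('a \<Rightarrow> 'a \<Rightarrow> 'b::comm_ring_1) \<Rightarrow> 'b" where
  "det_on N A = (\<Sum>\<tau> | \<tau> permutes N. of_int (sign \<tau>) * (\<Prod>v\<in>N. A (\<tau> v) v))"

lemma det_on_cong:
  "(\<And>i v. i \<in> N \<Longrightarrow> v \<in> N \<Longrightarrow> A i v = B i v) \<Longrightarrow> det_on N A = det_on N B"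
  unfolding det_on_def by (intro sum.cong prod.cong refl) (auto simp: permutes_in_image)

text \<open>Composing with the transposition of the two equal columns pairs the even permutations
  with the odd ones, and paired terms cancel.\<close>
lemma det_on_eq_0_if_equal_columns:
  assumes N: "finite N" and ab: "a \<in> N" "b \<in> N" "a \<noteq> b" and col: "\<And>i. A i a = A i b"
  shows "det_on N A = 0"
proof -
  define s where "s = transpose a b"
  define P where "P = {\<tau>. \<tau> permutes N}"
  define E where "E = {\<tau> \<in> P. evenperm \<tau>}"
  define f where "f = (\<lambda>\<tau>. of_int (sign \<tau>) * (\<Prod>v\<in>N. A (\<tau> v) v))"
  have s: "s permutes N"
    by (simp add: s_def ab permutes_swap_id)
  have ss: "\<tau> \<circ> s \<circ> s = \<tau>" for \<tau> :: "'a \<Rightarrow> 'a"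
    by (simp add: s_def comp_assoc)
  have swap: "\<tau> \<circ> s \<in> P" "evenperm (\<tau> \<circ> s) \<longleftrightarrow> \<not> evenperm \<tau>" "f (\<tau> \<circ> s) = - f \<tau>"
    if "\<tau> \<in> P" for \<tau>
  proof -
    have \<tau>: "\<tau> permutes N"
      using that by (simp add: P_def)
    show "\<tau> \<circ> s \<in> P"
      using \<tau> s by (simp add: P_def permutes_compose)
    show "evenperm (\<tau> \<circ> s) \<longleftrightarrow> \<not> evenperm \<tau>"
      using N \<tau> s ab by (simp add: evenperm_comp permutes_imp_permutation s_def evenperm_swap)
    then have "sign (\<tau> \<circ> s) = - sign \<tau>"
      by (simp add: sign_def)
    moreover have "(\<Prod>v\<in>N. A (\<tau> (s v)) v) = (\<Prod>v\<in>N. A (\<tau> (s v)) (s v))"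
      using col by (intro prod.cong refl) (auto simp: s_def transpose_def)
    moreover have "\<dots> = (\<Prod>v\<in>N. A (\<tau> v) v)"
      using prod.permute[OF s, of "\<lambda>v. A (\<tau> v) v"] by (simp add: comp_def)
    ultimately show "f (\<tau> \<circ> s) = - f \<tau>"
      by (simp add: f_def)
  qed
  have "sum f (P - E) = sum (\<lambda>\<tau>. f (\<tau> \<circ> s)) E"
    using swap ss by (intro sum.reindex_bij_witness[of _ "\<lambda>\<tau>. \<tau> \<circ> s" "\<lambda>\<tau>. \<tau> \<circ> s"])
      (auto simp: E_def)
  also have "\<dots> = - sum f E"
    using swap by (simp add: E_def sum_negf)
  finally have "sum f (P - E) = - sum f E" .
  moreover have "sum f P = sum f (P - E) + sum f E"
    using N by (intro sum.subset_diff) (auto simp: P_def E_def finite_permutations)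
  ultimately have "sum f P = 0"
    by simp
  then show ?thesis
    by (simp add: det_on_def f_def P_def)
qed

lemma det_on_divisibility_permutes:
  fixes x :: "'a \<Rightarrow> nat"
  assumes N: "finite N" and x: "inj_on x N" "\<And>v. v \<in> N \<Longrightarrow> x v > 0" and p: "p permutes N"
  shows "det_on N (\<lambda>i v. of_bool (x (p v) dvd x i)) = (of_int (sign p) :: 'b::comm_ring_1)"
proof -
  have vanish: "(\<Prod>v\<in>N. of_bool (x (p v) dvd x (\<tau> v)) :: 'b) = 0"
    if \<tau>: "\<tau> permutes N" "\<tau> \<noteq> p" for \<tau>
  proof (rule ccontr)
    assume "(\<Prod>v\<in>N. of_bool (x (p v) dvd x (\<tau> v)) :: 'b) \<noteq> 0"
    then have "x (p v) \<le> x (\<tau> v)" if "v \<in> N" for v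
      using N x that \<tau> by (auto simp: prod_of_bool permutes_in_image intro: dvd_imp_le)
    then have "p v = \<tau> v" if "v \<in> N" for v
      using bij_betw_eq_if_weight_le[OF N x(1)] permutes_imp_bij p \<tau> that by metis
    then have "\<tau> = p"
      using p \<tau> by (metis permutes_not_in ext)
    with \<tau> show False by simp
  qed
  have "det_on N (\<lambda>i v. of_bool (x (p v) dvd x i))
      = (\<Sum>\<tau>\<in>{p}. of_int (sign \<tau>) * (\<Prod>v\<in>N. of_bool (x (p v) dvd x (\<tau> v))) :: 'b)"
    unfolding det_on_def
  proof (rule sum.mono_neutral_right)
    show "finite {\<tau>. \<tau> permutes N}"
      using N by (rule finite_permutations)
    show "{p} \<subseteq> {\<tau>. \<tau> permutes N}"
      using p by simp
    show "\<forall>\<tau>\<in>{\<tau>. \<tau> permutes N} - {p}. of_int (sign \<tau>) * (\<Prod>v\<in>N. of_bool (x (p v) dvd x (\<tau> v))) = (0::'b)"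
      using vanish by simp
  qed
  then show ?thesis
    by simp
qed

lemma eq_if_det_on_divisibility_nonzero:
  fixes x :: "'a \<Rightarrow> nat"
  assumes N: "finite N" and x: "inj_on x N" "\<And>v. v \<in> N \<Longrightarrow> x v > 0" and p: "p permutes N"
    and \<mu>: "\<mu> ` N \<subseteq> N" "det_on N (\<lambda>i v. of_bool (x (\<mu> v) dvd x i) :: 'b::comm_ring_1) \<noteq> 0"
    and dvd: "\<And>v. v \<in> N \<Longrightarrow> x (\<mu> v) dvd x (p v)" and v: "v \<in> N"
  shows "\<mu> v = p v"
proof -
  have "inj_on \<mu> N"
    using \<mu> N det_on_eq_0_if_equal_columns[of N] by (metis (mono_tags, lifting) inj_onI)
  then have "bij_betw \<mu> N N"
    using \<mu>(1) N by (simp add: bij_betw_def endo_inj_surj)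
  moreover have "x (\<mu> v) \<le> x (p v)" if "v \<in> N" for v
    using dvd[OF that] x(2)[OF permutes_in_image[OF p, THEN iffD2, OF that]] by (rule dvd_imp_le)
  ultimately show ?thesis
    using bij_betw_eq_if_weight_le[OF N x(1) permutes_imp_bij[OF p]] v by blast
qed

lemma divisibility_columns_eq_diagonal:
  fixes x :: "'a \<Rightarrow> nat" and G :: "'a \<Rightarrow> ('j \<Rightarrow> 'a) \<Rightarrow> 'b::comm_ring_1"
  assumes N: "finite N" and J: "finite J" and x: "inj_on x N" "\<And>v. v \<in> N \<Longrightarrow> x v > 0"
    and p: "p permutes N" and G: "\<And>i m. G i m \<noteq> 0 \<Longrightarrow> \<forall>j\<in>J. x (m j) dvd x i"
    and \<nu>: "\<nu> \<in> PiE N (\<lambda>_. PiE J (\<lambda>_. N))"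
    and nz: "(\<Prod>v\<in>N. G (p v) (\<nu> v)) * (\<Prod>j\<in>J. det_on N (\<lambda>i v. of_bool (x (\<nu> v j) dvd x i))) \<noteq> 0"
  shows "\<nu> = (\<lambda>v\<in>N. \<lambda>j\<in>J. p v)"
proof -
  have "\<nu> v j = p v" if "v \<in> N" "j \<in> J" for v j
  proof (rule eq_if_det_on_divisibility_nonzero[OF N x p _ _ _ \<open>v \<in> N\<close>])
    show "(\<lambda>v. \<nu> v j) ` N \<subseteq> N"
      using \<nu> \<open>j \<in> J\<close> by auto
    show "det_on N (\<lambda>i v. of_bool (x (\<nu> v j) dvd x i)) \<noteq> (0::'b)"
    proof
      assume "det_on N (\<lambda>i v. of_bool (x (\<nu> v j) dvd x i)) = (0::'b)"
      then have "(\<Prod>j\<in>J. det_on N (\<lambda>i v. of_bool (x (\<nu> v j) dvd x i))) = (0::'b)"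
        by (simp add: prod.remove[OF J \<open>j \<in> J\<close>])
      with nz show False
        by simp
    qed
    show "x (\<nu> u j) dvd x (p u)" if "u \<in> N" for u
    proof (rule ccontr)
      assume "\<not> x (\<nu> u j) dvd x (p u)"
      then have "G (p u) (\<nu> u) = 0"
        using G \<open>j \<in> J\<close> by blast
      then have "(\<Prod>v\<in>N. G (p v) (\<nu> v)) = 0"
        by (simp add: prod.remove[OF N \<open>u \<in> N\<close>])
      with nz show False
        by simp
    qed
  qed
  then show ?thesis
    using \<nu> by (intro ext) (auto simp: PiE_iff extensional_def)
qed

lemma sum_det_on_divisibility_columns:
  fixes x :: "'a \<Rightarrow> nat" and G :: "'a \<Rightarrow> ('j \<Rightarrow> 'a) \<Rightarrow> 'b::comm_ring_1"
  assumes N: "finite N" and J: "finite J" and x: "inj_on x N" "\<And>v. v \<in> N \<Longrightarrow> x v > 0"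
    and p: "p permutes N" and G: "\<And>i m. G i m \<noteq> 0 \<Longrightarrow> \<forall>j\<in>J. x (m j) dvd x i"
  shows "(\<Sum>\<nu>\<in>PiE N (\<lambda>_. PiE J (\<lambda>_. N)).
           (\<Prod>v\<in>N. G (p v) (\<nu> v)) * (\<Prod>j\<in>J. det_on N (\<lambda>i v. of_bool (x (\<nu> v j) dvd x i))))
       = of_int (sign p) ^ card J * (\<Prod>v\<in>N. G v (\<lambda>j\<in>J. v))"
    (is "sum ?T ?Q = _")
proof -
  define diag where "diag = (\<lambda>v\<in>N. \<lambda>j\<in>J. p v)"
  have pN: "p v \<in> N" if "v \<in> N" for v
    using p that by (simp add: permutes_in_image)
  then have diag: "diag \<in> ?Q"
    by (auto simp: diag_def)
  have "sum ?T ?Q = sum ?T {diag}"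
    using N J diag divisibility_columns_eq_diagonal[OF N J x p G, folded diag_def]
    by (intro sum.mono_neutral_right) (auto intro!: finite_PiE)
  also have "\<dots> = (\<Prod>v\<in>N. G (p v) (diag v)) * (\<Prod>j\<in>J. det_on N (\<lambda>i v. of_bool (x (diag v j) dvd x i)))"
    by simp
  also have "(\<Prod>j\<in>J. det_on N (\<lambda>i v. of_bool (x (diag v j) dvd x i))) = (of_int (sign p) ^ card J :: 'b)"
  proof -
    have "det_on N (\<lambda>i v. of_bool (x (diag v j) dvd x i))
        = (det_on N (\<lambda>i v. of_bool (x (p v) dvd x i)) :: 'b)" if "j \<in> J" for j
      using that by (intro det_on_cong) (simp add: diag_def)
    then have "(\<Prod>j\<in>J. det_on N (\<lambda>i v. of_bool (x (diag v j) dvd x i))) = (\<Prod>j\<in>J. of_int (sign p) :: 'b)"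
      using det_on_divisibility_permutes[OF N x p] by (intro prod.cong) auto
    then show ?thesis
      by simp
  qed
  also have "(\<Prod>v\<in>N. G (p v) (diag v)) = (\<Prod>v\<in>N. G v (\<lambda>j\<in>J. v))"
    using prod.permute[OF p, of "\<lambda>v. G v (\<lambda>j\<in>J. v)"] pN by (simp add: comp_def diag_def)
  finally show ?thesis
    by (simp add: mult.commute)
qed

lemma sign_parity_factor: "(if odd k then of_int (sign p) else 1) * of_int (sign p) ^ k = (1::'a::ring_1)"
  by (cases "even k"; cases p rule: sign_cases) simp_all

section \<open>Expanding the hyperdeterminant\<close>

lemma prod_entries_expansion:
  fixes A :: "nat list \<Rightarrow> 'a::comm_semiring_1"
  assumes entries: "\<And>w. (\<And>j. j \<in> {1..k+1} \<Longrightarrow> w j \<in> {1..n}) \<Longrightarrow> A (map w [1..<k+2]) =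
      (\<Sum>m\<in>PiE {2..k+1} (\<lambda>_. {1..n}). G (w 1) m * (\<Prod>j\<in>{2..k+1}. E (w j) (m j)))"
    and \<sigma>: "\<And>j v. j \<in> {1..k+1} \<Longrightarrow> v \<in> {1..n} \<Longrightarrow> \<sigma> j v \<in> {1..n}"
  shows "(\<Prod>v\<in>{1..n}. A (map (\<lambda>j. \<sigma> j v) [1..<k+2]))
    = (\<Sum>\<nu>\<in>PiE {1..n} (\<lambda>_. PiE {2..k+1} (\<lambda>_. {1..n})).
         (\<Prod>v\<in>{1..n}. G (\<sigma> 1 v) (\<nu> v)) * (\<Prod>j\<in>{2..k+1}. \<Prod>v\<in>{1..n}. E (\<sigma> j v) (\<nu> v j)))"
proof -
  have "(\<Prod>v\<in>{1..n}. A (map (\<lambda>j. \<sigma> j v) [1..<k+2])) = (\<Prod>v\<in>{1..n}.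
      \<Sum>m\<in>PiE {2..k+1} (\<lambda>_. {1..n}). G (\<sigma> 1 v) m * (\<Prod>j\<in>{2..k+1}. E (\<sigma> j v) (m j)))"
    using \<sigma> by (intro prod.cong refl entries) auto
  also have "\<dots> = (\<Sum>\<nu>\<in>PiE {1..n} (\<lambda>_. PiE {2..k+1} (\<lambda>_. {1..n})).
      \<Prod>v\<in>{1..n}. G (\<sigma> 1 v) (\<nu> v) * (\<Prod>j\<in>{2..k+1}. E (\<sigma> j v) (\<nu> v j)))"
    by (rule prod_sum_PiE) (auto intro!: finite_PiE)
  also have "\<dots> = (\<Sum>\<nu>\<in>PiE {1..n} (\<lambda>_. PiE {2..k+1} (\<lambda>_. {1..n})).
      (\<Prod>v\<in>{1..n}. G (\<sigma> 1 v) (\<nu> v)) * (\<Prod>j\<in>{2..k+1}. \<Prod>v\<in>{1..n}. E (\<sigma> j v) (\<nu> v j)))"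
    by (intro sum.cong refl) (unfold prod.distrib, subst prod.swap, rule refl)
  finally show ?thesis .
qed

lemma hyperdet_sign_factorization:
  assumes I: "{2..k+1} \<subseteq> I"
  shows "hyperdet (k+1) n I A = 1 / of_nat (fact n) *
    (\<Sum>\<sigma>\<in>PiE (insert 1 {2..k+1}) (\<lambda>_. {p. p permutes {1..n}}).
      (if 1 \<in> I then of_int (sign (\<sigma> 1)) else 1) * (\<Prod>j\<in>{2..k+1}. of_int (sign (\<sigma> j))) *
      (\<Prod>v\<in>{1..n}. A (map (\<lambda>j. \<sigma> j v) [1..<k+2])))"
proof -
  have C: "{1..k+1} = insert 1 {2..k+1}" "1 \<notin> {2..k+1}"
    by auto
  have sgn: "(\<Prod>j\<in>insert 1 {2..k+1}. if j \<in> I then of_int (sign (\<sigma> j)) else 1)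
      = (if 1 \<in> I then of_int (sign (\<sigma> 1)) else 1) * (\<Prod>j\<in>{2..k+1}. of_int (sign (\<sigma> j)) :: complex)"
    for \<sigma> :: "nat \<Rightarrow> nat \<Rightarrow> nat"
  proof -
    have "j \<in> I" if "j \<in> {2..k+1}" for j
      using I that by blast
    then show ?thesis
      by (subst prod.insert) (auto intro!: prod.cong)
  qed
  show ?thesis
    unfolding hyperdet_def C(1) sgn by (simp only: add.assoc one_add_one)
qed

lemma hyperdet_expansion:
  fixes A :: "nat list \<Rightarrow> complex" and G :: "nat \<Rightarrow> (nat \<Rightarrow> nat) \<Rightarrow> complex"
    and E :: "nat \<Rightarrow> nat \<Rightarrow> complex"
  assumes I: "{2..k+1} \<subseteq> I"
    and entries: "\<And>w. (\<And>j. j \<in> {1..k+1} \<Longrightarrow> w j \<in> {1..n}) \<Longrightarrow> A (map w [1..<k+2]) =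
      (\<Sum>m\<in>PiE {2..k+1} (\<lambda>_. {1..n}). G (w 1) m * (\<Prod>j\<in>{2..k+1}. E (w j) (m j)))"
  shows "hyperdet (k+1) n I A = 1 / of_nat (fact n) *
    (\<Sum>p | p permutes {1..n}. (if 1 \<in> I then of_int (sign p) else 1) *
      (\<Sum>\<nu>\<in>PiE {1..n} (\<lambda>_. PiE {2..k+1} (\<lambda>_. {1..n})).
         (\<Prod>v\<in>{1..n}. G (p v) (\<nu> v)) * (\<Prod>j\<in>{2..k+1}. det_on {1..n} (\<lambda>i v. E i (\<nu> v j)))))"
proof -
  define N J where "N = {1..n}" and "J = {2..k+1}"
  define P Q where "P = {p. p permutes N}" and "Q = PiE N (\<lambda>_. PiE J (\<lambda>_. N))"
  define f where "f = (\<lambda>\<nu> p. (if 1 \<in> I then of_int (sign p) else 1) * (\<Prod>v\<in>N. G (p v) (\<nu> v)))"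
  define g where "g = (\<lambda>\<nu> (j :: nat) p. of_int (sign p) * (\<Prod>v\<in>N. E (p v) (\<nu> v j)))"
  have fin: "finite J" "1 \<notin> J" "finite P"
    by (auto simp: N_def J_def P_def finite_permutations)
  have "(if 1 \<in> I then of_int (sign (\<sigma> 1)) else 1) * (\<Prod>j\<in>J. of_int (sign (\<sigma> j))) *
      (\<Prod>v\<in>N. A (map (\<lambda>j. \<sigma> j v) [1..<k+2])) = (\<Sum>\<nu>\<in>Q. f \<nu> (\<sigma> 1) * (\<Prod>j\<in>J. g \<nu> j (\<sigma> j)))"
    if \<sigma>: "\<sigma> \<in> PiE (insert 1 J) (\<lambda>_. P)" for \<sigma>
  proof -
    have \<sigma>N: "\<sigma> j v \<in> N" if "j \<in> {1..k+1}" "v \<in> N" for j v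
    proof -
      have "j \<in> insert 1 J"
        using that(1) by (auto simp: J_def)
      then have "\<sigma> j permutes N"
        using PiE_mem[OF \<sigma>] by (simp add: P_def)
      then show ?thesis
        using that(2) by (simp add: permutes_in_image)
    qed
    have "(\<Prod>v\<in>N. A (map (\<lambda>j. \<sigma> j v) [1..<k+2]))
        = (\<Sum>\<nu>\<in>Q. (\<Prod>v\<in>N. G (\<sigma> 1 v) (\<nu> v)) * (\<Prod>j\<in>J. \<Prod>v\<in>N. E (\<sigma> j v) (\<nu> v j)))"
      using entries \<sigma>N unfolding N_def J_def Q_def by (rule prod_entries_expansion)
    then show ?thesis
      by (simp add: f_def g_def sum_distrib_left prod.distrib mult_ac)
  qed
  then have "hyperdet (k+1) n I A = 1 / of_nat (fact n) *
      (\<Sum>\<sigma>\<in>PiE (insert 1 J) (\<lambda>_. P). \<Sum>\<nu>\<in>Q. f \<nu> (\<sigma> 1) * (\<Prod>j\<in>J. g \<nu> j (\<sigma> j)))"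
    unfolding hyperdet_sign_factorization[OF I] N_def[symmetric] J_def[symmetric] P_def[symmetric]
    by (intro arg_cong[where f = "(*) _"] sum.cong refl) simp
  also have "\<dots> = 1 / of_nat (fact n) * (\<Sum>\<nu>\<in>Q. (\<Sum>p\<in>P. f \<nu> p) * (\<Prod>j\<in>J. \<Sum>p\<in>P. g \<nu> j p))"
    using fin by (subst sum.swap) (simp add: sum_PiE_insert_mult_prod)
  also have "\<dots> = 1 / of_nat (fact n) * (\<Sum>\<nu>\<in>Q. \<Sum>p\<in>P. (if 1 \<in> I then of_int (sign p) else 1) *
      ((\<Prod>v\<in>N. G (p v) (\<nu> v)) * (\<Prod>j\<in>J. det_on N (\<lambda>i v. E i (\<nu> v j)))))"
    by (simp add: f_def g_def det_on_def P_def sum_distrib_right mult.assoc)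
  also have "\<dots> = 1 / of_nat (fact n) * (\<Sum>p\<in>P. (if 1 \<in> I then of_int (sign p) else 1) *
      (\<Sum>\<nu>\<in>Q. (\<Prod>v\<in>N. G (p v) (\<nu> v)) * (\<Prod>j\<in>J. det_on N (\<lambda>i v. E i (\<nu> v j)))))"
    by (subst sum.swap) (simp add: sum_distrib_left)
  finally show ?thesis
    by (simp add: N_def J_def P_def Q_def)
qed

lemma hyperdet_divisibility_factorization:
  fixes A :: "nat list \<Rightarrow> complex" and G :: "nat \<Rightarrow> (nat \<Rightarrow> nat) \<Rightarrow> complex" and x :: "nat \<Rightarrow> nat"
  assumes I: "{2..k+1} \<subseteq> I" and x: "inj_on x {1..n}" "\<And>v. v \<in> {1..n} \<Longrightarrow> x v > 0"
    and G: "\<And>i m. G i m \<noteq> 0 \<Longrightarrow> \<forall>j\<in>{2..k+1}. x (m j) dvd x i"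
    and entries: "\<And>w. (\<And>j. j \<in> {1..k+1} \<Longrightarrow> w j \<in> {1..n}) \<Longrightarrow> A (map w [1..<k+2]) =
      (\<Sum>m\<in>PiE {2..k+1} (\<lambda>_. {1..n}). G (w 1) m * (\<Prod>j\<in>{2..k+1}. of_bool (x (m j) dvd x (w j))))"
  shows "hyperdet (k+1) n I A = 1 / of_nat (fact n) *
    (\<Sum>p | p permutes {1..n}. (if 1 \<in> I then of_int (sign p) else 1) * of_int (sign p) ^ k *
      (\<Prod>v\<in>{1..n}. G v (\<lambda>j\<in>{2..k+1}. v)))"
proof -
  note hyperdet_expansion[where A = A and G = G and E = "\<lambda>i m. of_bool (x m dvd x i)", OF I entries]
  also have "1 / of_nat (fact n) * (\<Sum>p | p permutes {1..n}. (if 1 \<in> I then of_int (sign p) else 1) *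
      (\<Sum>\<nu>\<in>PiE {1..n} (\<lambda>_. PiE {2..k+1} (\<lambda>_. {1..n})). (\<Prod>v\<in>{1..n}. G (p v) (\<nu> v)) *
        (\<Prod>j\<in>{2..k+1}. det_on {1..n} (\<lambda>i v. of_bool (x (\<nu> v j) dvd x i)))))
    = 1 / of_nat (fact n) * (\<Sum>p | p permutes {1..n}. (if 1 \<in> I then of_int (sign p) else 1) *
      (of_int (sign p) ^ k * (\<Prod>v\<in>{1..n}. G v (\<lambda>j\<in>{2..k+1}. v))))"
  proof (intro arg_cong[where f = "(*) _"] sum.cong refl)
    fix p assume "p \<in> {p. p permutes {1..n}}"
    then show "(\<Sum>\<nu>\<in>PiE {1..n} (\<lambda>_. PiE {2..k+1} (\<lambda>_. {1..n})). (\<Prod>v\<in>{1..n}. G (p v) (\<nu> v)) *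
        (\<Prod>j\<in>{2..k+1}. det_on {1..n} (\<lambda>i v. of_bool (x (\<nu> v j) dvd x i))))
      = of_int (sign p) ^ k * (\<Prod>v\<in>{1..n}. G v (\<lambda>j\<in>{2..k+1}. v))"
      using sum_det_on_divisibility_columns[of "{1..n}" "{2..k+1}" x p G] x G by simp
  qed
  finally show ?thesis
    by (simp only: mult.assoc)
qed

section \<open>The Moebius coefficients of an even function\<close>

text \<open>The coefficient g_r(e) of the proof idea; its k arguments are indexed by 2, ..., k+1, the
  directions of the hypermatrix after the first.\<close>
definition moebius_coeff :: "nat \<Rightarrow> (nat \<Rightarrow> nat list \<Rightarrow> complex) \<Rightarrow> nat \<Rightarrow> (nat \<Rightarrow> nat) \<Rightarrow> complex" where
  "moebius_coeff k F r e = (\<Sum>d\<in>PiE {2..k+1} (\<lambda>j. {t. t dvd e j}).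
     F r (map d [2..<k+2]) * (\<Prod>j\<in>{2..k+1}. of_int (moebius_mu (e j div d j))))"

lemma moebius_coeff_cong:
  "(\<And>j. j \<in> {2..k+1} \<Longrightarrow> e j = e' j) \<Longrightarrow> moebius_coeff k F r e = moebius_coeff k F r e'"
  unfolding moebius_coeff_def by (intro sum.cong PiE_cong prod.cong) auto

lemma even_modD:
  "even_mod k F \<Longrightarrow> 0 < r \<Longrightarrow> length ns = k \<Longrightarrow> (\<And>m. m \<in> set ns \<Longrightarrow> 0 < m) \<Longrightarrow>
    F r ns = F r (map (\<lambda>m. gcd m r) ns)"
  unfolding even_mod_def by blast

lemma even_mod_eq_sum_moebius_coeff:
  assumes ev: "even_mod k F" and r: "r > 0" and ns: "\<And>j. j \<in> {2..k+1} \<Longrightarrow> ns j > 0"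
  shows "F r (map ns [2..<k+2]) = (\<Sum>e\<in>PiE {2..k+1} (\<lambda>j. {d. d dvd gcd (ns j) r}). moebius_coeff k F r e)"
proof -
  define c where "c = (\<lambda>j. gcd (ns j) r)"
  have "F r (map ns [2..<k+2]) = F r (map (\<lambda>m. gcd m r) (map ns [2..<k+2]))"
    using ns by (intro even_modD[OF ev r]) auto
  also have "\<dots> = F r (map (restrict c {2..k+1}) [2..<k+2])"
    by (intro arg_cong[where f = "F r"]) (auto simp: c_def)
  also have "\<dots> = (\<Sum>e\<in>PiE {2..k+1} (\<lambda>j. {d. d dvd c j}). moebius_coeff k F r e)"
    unfolding moebius_coeff_def using r by (intro moebius_inversion_PiE[symmetric]) (auto simp: c_def)
  finally show ?thesis
    by (simp add: c_def)
qed

definition divisor_coeff ::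
    "nat \<Rightarrow> (nat \<Rightarrow> nat list \<Rightarrow> complex) \<Rightarrow> ('a \<Rightarrow> nat) \<Rightarrow> 'a \<Rightarrow> (nat \<Rightarrow> 'a) \<Rightarrow> complex" where
  "divisor_coeff k F x i m =
     of_bool (\<forall>j\<in>{2..k+1}. x (m j) dvd x i) * moebius_coeff k F (x i) (\<lambda>j. x (m j))"

lemma even_mod_entry_expansion:
  assumes N: "finite N" and x: "inj_on x N" "\<And>v. v \<in> N \<Longrightarrow> x v > 0" and fc: "factor_closed (x ` N)"
    and ev: "even_mod k F" and i: "i \<in> N" and w: "\<And>j. j \<in> {2..k+1} \<Longrightarrow> w j \<in> N"
  shows "F (x i) (map (\<lambda>j. x (w j)) [2..<k+2]) = (\<Sum>m\<in>PiE {2..k+1} (\<lambda>_. N).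
           divisor_coeff k F x i m * (\<Prod>j\<in>{2..k+1}. of_bool (x (m j) dvd x (w j))))"
proof -
  define J where "J = {2..k+1}"
  define B where "B = (\<lambda>j. {d. d dvd gcd (x (w j)) (x i)})"
  have J: "finite J"
    by (simp add: J_def)
  have B: "B j \<subseteq> x ` N" if "j \<in> J" for j
  proof
    fix d assume "d \<in> B j"
    then have "d dvd x i" "d > 0"
      using x(2)[OF i] by (auto simp: B_def intro: Nat.gr0I)
    then show "d \<in> x ` N"
      using fc i unfolding factor_closed_def by blast
  qed
  have "F (x i) (map (\<lambda>j. x (w j)) [2..<k+2]) = (\<Sum>e\<in>PiE J B. moebius_coeff k F (x i) e)"
    unfolding J_def B_def using x w i by (intro even_mod_eq_sum_moebius_coeff ev) auto
  also have "\<dots> = (\<Sum>m\<in>PiE J (\<lambda>_. N).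
      moebius_coeff k F (x i) (\<lambda>j\<in>J. x (m j)) * of_bool (\<forall>j\<in>J. x (m j) \<in> B j))"
    using J N x(1) B by (rule sum_PiE_reindex_inj_on)
  also have "\<dots> = (\<Sum>m\<in>PiE J (\<lambda>_. N). divisor_coeff k F x i m * (\<Prod>j\<in>J. of_bool (x (m j) dvd x (w j))))"
  proof (intro sum.cong refl)
    fix m
    have "moebius_coeff k F (x i) (\<lambda>j\<in>J. x (m j)) = moebius_coeff k F (x i) (\<lambda>j. x (m j))"
      by (rule moebius_coeff_cong) (simp add: J_def)
    moreover have "of_bool (\<forall>j\<in>J. x (m j) \<in> B j)
        = of_bool (\<forall>j\<in>J. x (m j) dvd x i) * (\<Prod>j\<in>J. of_bool (x (m j) dvd x (w j)) :: complex)"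
      using J by (auto simp: B_def prod_of_bool)
    ultimately show "moebius_coeff k F (x i) (\<lambda>j\<in>J. x (m j)) * of_bool (\<forall>j\<in>J. x (m j) \<in> B j)
        = divisor_coeff k F x i m * (\<Prod>j\<in>J. of_bool (x (m j) dvd x (w j)))"
      by (simp add: divisor_coeff_def J_def)
  qed
  finally show ?thesis
    by (simp add: J_def)
qed

lemma even_mod_hyperdet_entry:
  fixes x :: "nat \<Rightarrow> nat"
  assumes inj: "inj_on x {1..n}" and pos: "\<forall>i\<in>{1..n}. 0 < x i" and fc: "factor_closed (x ` {1..n})"
    and ev: "even_mod k F" and w: "\<And>j. j \<in> {1..k+1} \<Longrightarrow> w j \<in> {1..n}"
  shows "F (x (map w [1..<k+2] ! 0)) (map x (tl (map w [1..<k+2]))) =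
    (\<Sum>m\<in>PiE {2..k+1} (\<lambda>_. {1..n}). divisor_coeff k F x (w 1) m * (\<Prod>j\<in>{2..k+1}. of_bool (x (m j) dvd x (w j))))"
proof -
  have "[1..<k+2] = 1 # [2..<k+2]"
    by (simp add: upt_conv_Cons numeral_2_eq_2 del: upt_Suc)
  then have "F (x (map w [1..<k+2] ! 0)) (map x (tl (map w [1..<k+2]))) = F (x (w 1)) (map (\<lambda>j. x (w j)) [2..<k+2])"
    by (simp add: comp_def del: upt_Suc)
  also have "\<dots> = (\<Sum>m\<in>PiE {2..k+1} (\<lambda>_. {1..n}).
      divisor_coeff k F x (w 1) m * (\<Prod>j\<in>{2..k+1}. of_bool (x (m j) dvd x (w j))))"
    using inj pos fc ev w by (intro even_mod_entry_expansion) auto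
  finally show ?thesis .
qed

lemma moebius_coeff_diagonal:
  assumes r: "r > 0"
  shows "moebius_coeff k F r (\<lambda>_. r) = of_nat r ^ k * fourier_alpha k F r (replicate k r)"
proof -
  define h where "h = (\<lambda>\<delta>s. F r \<delta>s * (\<Prod>i<k. of_int (moebius_mu (r div \<delta>s ! i))))"
  have prod_upt: "(\<Prod>j\<in>{2..<2+k}. g (d j)) = (\<Prod>i<k. g (map d [2..<2+k] ! i))" for g :: "nat \<Rightarrow> complex" and d
    by (rule prod.reindex_bij_witness[of _ "\<lambda>i. i + 2" "\<lambda>j. j - 2"]) (auto simp del: upt_Suc simp: numeral_2_eq_2 Suc_diff_Suc)
  have ivl: "{2..k+1} = {2..<2+k}" "[2..<k+2] = [2..<2+k]"
    by (auto simp: add.commute)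
  have "moebius_coeff k F r (\<lambda>_. r) = (\<Sum>d\<in>PiE {2..<2+k} (\<lambda>_. {t. t dvd r}). h (map d [2..<2+k]))"
    unfolding moebius_coeff_def h_def prod_upt[of "\<lambda>t. of_int (moebius_mu (r div t))"] ivl ..
  also have "\<dots> = (\<Sum>\<delta>s | length \<delta>s = k \<and> set \<delta>s \<subseteq> {t. t dvd r}. h \<delta>s)"
    by (rule sum.reindex_bij_betw[OF bij_betw_map_upt_PiE])
  also have "\<dots> = of_nat r ^ k * fourier_alpha k F r (replicate k r)"
    using r by (simp add: fourier_alpha_def h_def subset_eq ramanujan_c_Suc_0_right)
  finally show ?thesis .
qed

lemma divisor_coeff_diagonal:
  assumes "x v > 0"
  shows "divisor_coeff k F x v (\<lambda>j\<in>{2..k+1}. v) = of_nat (x v) ^ k * fourier_alpha k F (x v) (replicate k (x v))"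
proof -
  have "moebius_coeff k F (x v) (\<lambda>j. x ((\<lambda>j\<in>{2..k+1}. v) j)) = moebius_coeff k F (x v) (\<lambda>_. x v)"
    by (rule moebius_coeff_cong) simp
  then show ?thesis
    using assms by (simp add: divisor_coeff_def moebius_coeff_diagonal)
qed

theorem theorem4p6:
  fixes n k :: nat and x :: "nat \<Rightarrow> nat" and F :: "nat \<Rightarrow> nat list \<Rightarrow> complex"
    and I :: "nat set"
  assumes inj: "inj_on x {1..n}"
    and pos: "\<forall>i\<in>{1..n}. 0 < x i"
    and fc: "factor_closed (x ` {1..n})"
    and ev: "even_mod k F"
    and I_def: "I = (if even k then {2..k+1} else {1..k+1})"
  shows "hyperdet (k+1) n I (\<lambda>is. F (x (is ! 0)) (map x (tl is))) =
         (\<Prod>v\<in>{1..n}. of_nat (x v)) ^ k * (\<Prod>v\<in>{1..n}. fourier_alpha k F (x v) (replicate k (x v)))"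
proof -
  have I: "{2..k+1} \<subseteq> I" "1 \<in> I \<longleftrightarrow> odd k"
    by (auto simp: I_def)
  have "hyperdet (k+1) n I (\<lambda>is. F (x (is ! 0)) (map x (tl is))) = 1 / of_nat (fact n) *
      (\<Sum>p | p permutes {1..n}. (if 1 \<in> I then of_int (sign p) else 1) * of_int (sign p) ^ k *
        (\<Prod>v\<in>{1..n}. divisor_coeff k F x v (\<lambda>j\<in>{2..k+1}. v)))"
    using pos by (intro hyperdet_divisibility_factorization[OF I(1) inj] even_mod_hyperdet_entry[OF inj pos fc ev])
      (auto simp: divisor_coeff_def)
  also have "\<dots> = (\<Prod>v\<in>{1..n}. divisor_coeff k F x v (\<lambda>j\<in>{2..k+1}. v))"
    unfolding I(2) sign_parity_factor mult_1 by (simp add: card_permutations)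
  also have "\<dots> = (\<Prod>v\<in>{1..n}. of_nat (x v) ^ k * fourier_alpha k F (x v) (replicate k (x v)))"
    using pos by (intro prod.cong refl divisor_coeff_diagonal) auto
  finally show ?thesis
    by (simp add: prod.distrib prod_power_distrib)
qed

end
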